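(* Let $m\geq 1$ and $n\geq 2$ be integers, let $K$ be an algebraically closed field, and let $p(x_1,\ldots,x_m)\in K\langle x_1,\ldots,x_m\rangle$ be a polynomial with zero constant term. For $k\geq 1$ and $1\leq i_1,\ldots,i_k\leq m$ let $p_{i_1\cdots i_k}$ be the commutative polynomial in $m(k+1)$ variables defined in the context. Suppose that $\mathrm{ord}(p)=r$ with $1\leq r\leq n-1$. Then: (i) $p(K)=\{0\}$, i.e. $p(c_1,\ldots,c_m)=0$ for all $c_1,\ldots,c_m\in K$; (ii) if $r\geq 2$, then $p_{i_1\cdots i_k}$ vanishes at every point of $K^{m(k+1)}$ for all $1\leq i_1,\ldots,i_k\leq m$ and all $k=1,\ldots,r-1$; consequently $p(T_n(K))\subseteq T_n(K)^{(r-1)}$; (iii) there exist $1\leq i_1,\ldots,i_r\leq m$ such that $p_{i_1\cdots i_r}$ does not vanish at some point of $K^{m(r+1)}$.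
   Context: $T_n(K)$ denotes the algebra of $n\times n$ upper triangular matrices over $K$; for $t\geq 0$, $T_n(K)^{(t)}$ is the set of upper triangular matrices whose $(i,j)$ entries vanish whenever $j-i\leq t$. For a $K$-algebra $\mathcal{A}$ let $\mathcal{T}(\mathcal{A})$ be its set of polynomial identities; with $T_1(K)=K$, the order $\mathrm{ord}(p)$ is the least $k\geq 1$ with $p\in\mathcal{T}(T_k(K))$ and $p\notin\mathcal{T}(T_{k+1}(K))$, and $\mathrm{ord}(p)=0$ if $p\notin\mathcal{T}(K)$. The polynomials $p_{i_1\cdots i_k}$: writing $p=\sum_w\lambda_w w$ as a linear combination of nonempty words $w$ in $x_1,\ldots,x_m$, for $\bar z_1,\ldots,\bar z_{k+1}\in K^m$ set $p_{i_1\cdots i_k}(\bar z_1,\ldots,\bar z_{k+1})=\sum_w\lambda_w\sum w_1(\bar z_1)w_2(\bar z_2)\cdots w_{k+1}(\bar z_{k+1})$, where the inner sum runs over all factorizations $w=w_1x_{i_1}w_2x_{i_2}\cdots w_kx_{i_k}w_{k+1}$ with $w_1,\ldots,w_{k+1}$ (possibly empty) words, $w_j(\bar z)$ denotes the value of the monomial $w_j$ at the commuting scalars $\bar z\in K^m$, and the empty word evaluates to $1$. Equivalently, these are the polynomials such that for all $u_i=(a^{(i)}_{jk})\in T_n(K)$ the $(s,t)$ entry ($s<t$) of $p(u_1,\ldots,u_m)$ equals $\sum_{k=1}^{t-s}\sum_{s=j_1<\cdots<j_{k+1}=t,\ 1\le i_1,\ldots,i_k\le m} p_{i_1\cdots i_k}(\bar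 a_{j_1j_1},\ldots,\bar a_{j_{k+1}j_{k+1}})a^{(i_1)}_{j_1j_2}\cdots a^{(i_k)}_{j_kj_{k+1}}$, with $\bar a_{jj}=(a^{(1)}_{jj},\ldots,a^{(m)}_{jj})$. *)

theory Defs
  imports "HOL-Computational_Algebra.Polynomial"
begin

text \<open>Noncommutative polynomials in x_0, ..., x_(m-1) (0-based letters) are represented
by their coefficient function on words (letter lists): nat list => 'a.\<close>

definition nc_poly :: "nat \<Rightarrow> (nat list \<Rightarrow> 'a::zero) \<Rightarrow> bool" where
  "nc_poly m p \<longleftrightarrow> finite {w. p w \<noteq> 0} \<and> (\<forall>w. p w \<noteq> 0 \<longrightarrow> w \<noteq> [] \<and> set w \<subseteq> {..<m})"

text \<open>Square matrices of size k are functions nat => nat => 'a, indices 0..k-1.\<close>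

definition mmul :: "nat \<Rightarrow> (nat \<Rightarrow> nat \<Rightarrow> 'a::comm_ring_1) \<Rightarrow> (nat \<Rightarrow> nat \<Rightarrow> 'a) \<Rightarrow> nat \<Rightarrow> nat \<Rightarrow> 'a" where
  "mmul k A B = (\<lambda>i j. \<Sum>l<k. A i l * B l j)"

definition mone :: "nat \<Rightarrow> nat \<Rightarrow> nat \<Rightarrow> 'a::comm_ring_1" where
  "mone k = (\<lambda>i j. if i = j \<and> i < k then 1 else 0)"

definition upper_tri :: "nat \<Rightarrow> (nat \<Rightarrow> nat \<Rightarrow> 'a::zero) \<Rightarrow> bool" where
  "upper_tri k A \<longleftrightarrow> (\<forall>i j. A i j \<noteq> 0 \<longrightarrow> i \<le> j \<and> j < k)"

definition upper_tri_shift :: "nat \<Rightarrow> nat \<Rightarrow> (nat \<Rightarrow> nat \<Rightarrow> 'a::zero) \<Rightarrow> bool" where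
  "upper_tri_shift k t A \<longleftrightarrow> upper_tri k A \<and> (\<forall>i<k. \<forall>j<k. int j - int i \<le> int t \<longrightarrow> A i j = 0)"

fun wmat :: "nat \<Rightarrow> (nat \<Rightarrow> nat \<Rightarrow> nat \<Rightarrow> 'a::comm_ring_1) \<Rightarrow> nat list \<Rightarrow> nat \<Rightarrow> nat \<Rightarrow> 'a" where
  "wmat k u [] = mone k"
| "wmat k u (x # w) = mmul k (u x) (wmat k u w)"

definition peval :: "nat \<Rightarrow> (nat list \<Rightarrow> 'a::comm_ring_1) \<Rightarrow> (nat \<Rightarrow> nat \<Rightarrow> nat \<Rightarrow> 'a) \<Rightarrow> nat \<Rightarrow> nat \<Rightarrow> 'a" where
  "peval k p u = (\<lambda>i j. \<Sum>w\<in>{w. p w \<noteq> 0}. p w * wmat k u w i j)"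

definition peval_scalar :: "(nat list \<Rightarrow> 'a::comm_ring_1) \<Rightarrow> (nat \<Rightarrow> 'a) \<Rightarrow> 'a" where
  "peval_scalar p c = (\<Sum>w\<in>{w. p w \<noteq> 0}. p w * prod_list (map c w))"

definition is_PI :: "nat \<Rightarrow> (nat list \<Rightarrow> 'a::comm_ring_1) \<Rightarrow> bool" where
  "is_PI k p \<longleftrightarrow> (\<forall>u. (\<forall>x. upper_tri k (u x)) \<longrightarrow> (\<forall>i<k. \<forall>j<k. peval k p u i j = 0))"

text \<open>ord(p): 0 if p is not an identity of K = T_1(K); otherwise the least k >= 1 with
p in T(T_k) and p not in T(T_(k+1)).  (If no such k exists, which the statement never
concerns since it assumes ord p >= 1 is attained, we also return 0.)\<close>
definition ord :: "(nat list \<Rightarrow> 'a::comm_ring_1) \<Rightarrow> nat" where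
  "ord p = (if \<not> is_PI 1 p then 0
            else if (\<exists>k\<ge>1. is_PI k p \<and> \<not> is_PI (Suc k) p)
                 then (LEAST k. k \<ge> 1 \<and> is_PI k p \<and> \<not> is_PI (Suc k) p)
                 else 0)"

text \<open>Sum over all factorizations w = w_1 x_(i_1) w_2 ... x_(i_k) w_(k+1) of
w_1(z_0) w_2(z_1) ... w_(k+1)(z_k), where z j is the point z_j in K^m (coordinates z j 0, ..., z j (m-1)).\<close>
fun fact_sum :: "nat list \<Rightarrow> (nat \<Rightarrow> nat \<Rightarrow> 'a::comm_ring_1) \<Rightarrow> nat list \<Rightarrow> 'a" where
  "fact_sum [] z w = prod_list (map (z 0) w)"
| "fact_sum (i # is) z w =
     (\<Sum>a<length w. if w ! a = i
        then prod_list (map (z 0) (take a w)) * fact_sum is (\<lambda>j. z (Suc j)) (drop (Suc a) w)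
        else 0)"

definition pcomm :: "(nat list \<Rightarrow> 'a::comm_ring_1) \<Rightarrow> nat list \<Rightarrow> (nat \<Rightarrow> nat \<Rightarrow> 'a) \<Rightarrow> 'a" where
  "pcomm p is z = (\<Sum>w\<in>{w. p w \<noteq> 0}. p w * fact_sum is z w)"

end

theory Submission
  imports Defs
begin

text \<open>For upper triangular u_1, ..., u_m, the (s,t) entry of a word in the u_i is obtained by
walking from s to t through the matrix: either staying at the current diagonal position (a
diagonal entry of the letter read) or jumping from j to some j' > j (an off-diagonal entry
u_i(j,j')).  Summing over the words of p, the (s,t) entry of p(u) is therefore a sum over
chains s = j_0 < ... < j_k = t and letters i_1, ..., i_k of
p_(i_1 ... i_k) evaluated at the diagonals of positions j_0, ..., j_k, times
u_(i_1)(j_0,j_1) ... u_(i_k)(j_(k-1),j_k).  Hence entries with t - s <= d vanish as soon as all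
p_(i_1 ... i_k) with k <= d vanish.  Conversely, for the bidiagonal substitution whose
diagonals are z_0, ..., z_k and where u_(i_(j+1)) has the entry 1 at (j, j+1), only one chain
survives and the (0,k) entry of p(u) is exactly p_(i_1 ... i_k)(z_0, ..., z_k).  So p is an
identity of T_N(K) iff all p_(i_1 ... i_k) with k < N vanish identically, and the three claims
are read off from ord p = r.\<close>

fun fact_sum_gen ::
  "nat list \<Rightarrow> (nat \<Rightarrow> nat \<Rightarrow> 'a::comm_ring_1) \<Rightarrow> (nat list \<Rightarrow> 'a) \<Rightarrow> nat list \<Rightarrow> 'a" where
  "fact_sum_gen [] z f w = f w"
| "fact_sum_gen (i # is) z f w = (\<Sum>a<length w. if w ! a = i
        then prod_list (map (z 0) (take a w)) * fact_sum_gen is (\<lambda>j. z (Suc j)) f (drop (Suc a) w)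
        else 0)"

lemma fact_sum_gen_cong:
  "(\<And>v. set v \<subseteq> set w \<Longrightarrow> f v = g v) \<Longrightarrow> fact_sum_gen is z f w = fact_sum_gen is z g w"
proof (induction "is" arbitrary: z w)
  case (Cons i "is")
  have "fact_sum_gen is (\<lambda>j. z (Suc j)) f (drop (Suc a) w)
      = fact_sum_gen is (\<lambda>j. z (Suc j)) g (drop (Suc a) w)" for a
    by (rule Cons.IH) (meson Cons.prems order_trans set_drop_subset)
  then show ?case by (simp only: fact_sum_gen.simps)
qed simp

lemma fact_sum_gen_sum:
  "fact_sum_gen is z (\<lambda>v. \<Sum>j\<in>J. f j v) w = (\<Sum>j\<in>J. fact_sum_gen is z (f j) w)"
proof (induction "is" arbitrary: z w)
  case (Cons i "is")
  have if_sum: "(if P then \<Sum>n\<in>J. h n else 0) = (\<Sum>n\<in>J. if P then h n else 0)"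
    for P and h :: "_ \<Rightarrow> 'a"
    by simp
  show ?case
    by (simp only: fact_sum_gen.simps Cons.IH sum_distrib_left if_sum) (rule sum.swap)
qed simp

lemma fact_sum_gen_mult:
  "fact_sum_gen is z (\<lambda>v. c * f v) w = c * fact_sum_gen is z f w"
  by (induction "is" arbitrary: z w)
    (simp_all add: sum_distrib_left if_distrib mult.left_commute cong: if_cong)

lemma fact_sum_gen_nested:
  "fact_sum_gen is z (fact_sum_gen js z' f) w
   = fact_sum_gen (is @ js) (\<lambda>a. if a < length is then z a else z' (a - length is)) f w"
proof (induction "is" arbitrary: z w)
  case (Cons i "is")
  have "(\<lambda>j. if j < length is then z (Suc j) else z' (Suc j - length (i # is)))
      = (\<lambda>a. if a < length is then z (Suc a) else z' (a - length is))"
    by auto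
  then show ?case
    by (simp only: fact_sum_gen.simps append_Cons) (rule sum.cong, simp_all add: Cons.IH)
qed simp

lemma fact_sum_gen_prod_list:
  "fact_sum_gen is z (\<lambda>v. prod_list (map c v)) w
   = fact_sum is (\<lambda>a. if a < length is then z a else c) w"
proof (induction "is" arbitrary: z w)
  case (Cons i "is")
  have "(\<lambda>j. if Suc j < Suc (length is) then z (Suc j) else c)
      = (\<lambda>a. if a < length is then z (Suc a) else c)"
    by auto
  then show ?case
    by (simp only: fact_sum_gen.simps fact_sum.simps) (rule sum.cong, simp_all add: Cons.IH)
qed simp

lemma fact_sum_gen_single_Cons:
  "fact_sum_gen [i] z f (x # v) = (if x = i then f v else 0) + z 0 x * fact_sum_gen [i] z f v"
  by (simp only: fact_sum_gen.simps length_Cons sum.lessThan_Suc_shift)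
    (simp add: sum_distrib_left if_distrib mult.assoc cong: if_cong)

lemma fact_sum_cong:
  "(\<And>a. a \<le> length is \<Longrightarrow> z a = z' a) \<Longrightarrow> fact_sum is z w = fact_sum is z' w"
proof (induction "is" arbitrary: z z' w)
  case (Cons i "is")
  have "fact_sum is (\<lambda>j. z (Suc j)) v = fact_sum is (\<lambda>j. z' (Suc j)) v" for v
    by (rule Cons.IH) (simp add: Cons.prems)
  then show ?case using Cons.prems[of 0] by (simp only: fact_sum.simps)
qed simp

lemma pcomm_cong:
  "(\<And>a. a \<le> length is \<Longrightarrow> z a = z' a) \<Longrightarrow> pcomm p is z = pcomm p is z'"
  unfolding pcomm_def by (metis (no_types, lifting) fact_sum_cong sum.cong)

lemma pcomm_Nil: "pcomm p [] (\<lambda>_. c) = peval_scalar p c"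
  by (simp add: pcomm_def peval_scalar_def)

lemma upper_triD: "upper_tri k A \<Longrightarrow> \<not> (i \<le> j \<and> j < k) \<Longrightarrow> A i j = 0"
  unfolding upper_tri_def by blast

lemma upper_tri_mmul:
  assumes "upper_tri k A" "upper_tri k B"
  shows "upper_tri k (mmul k A B)"
  unfolding upper_tri_def
proof (intro allI impI)
  fix i j assume "mmul k A B i j \<noteq> 0"
  then obtain l where "A i l * B l j \<noteq> 0"
    unfolding mmul_def by (meson sum.not_neutral_contains_not_neutral)
  then have "A i l \<noteq> 0" "B l j \<noteq> 0" by auto
  then show "i \<le> j \<and> j < k" using assms unfolding upper_tri_def by fastforce
qed

lemma upper_tri_wmat: "(\<forall>x\<in>set v. upper_tri k (u x)) \<Longrightarrow> upper_tri k (wmat k u v)"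
proof (induction v)
  case Nil
  show ?case by (auto simp: upper_tri_def mone_def)
qed (simp add: upper_tri_mmul)

lemma wmat_diag:
  assumes "\<forall>x\<in>set v. upper_tri k (u x)" and "s < k"
  shows "wmat k u v s s = prod_list (map (\<lambda>x. u x s s) v)"
  using assms(1)
proof (induction v)
  case (Cons x v)
  have up: "upper_tri k (wmat k u v)" using Cons.prems by (simp add: upper_tri_wmat)
  have "wmat k u (x # v) s s = (\<Sum>l<k. u x s l * wmat k u v l s)" by (simp add: mmul_def)
  also have "\<dots> = (\<Sum>l\<in>{s}. u x s l * wmat k u v l s)"
  proof (rule sum.mono_neutral_right)
    show "\<forall>l\<in>{..<k} - {s}. u x s l * wmat k u v l s = 0"
    proof
      fix l assume "l \<in> {..<k} - {s}"
      then show "u x s l * wmat k u v l s = 0"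
        using upper_triD[OF up, of l s] upper_triD[of k "u x" s l] Cons.prems
        by (cases "l < s") auto
    qed
  qed (use \<open>s < k\<close> in auto)
  finally show ?case using Cons by simp
qed (simp add: mone_def \<open>s < k\<close>)

text \<open>Above the diagonal, the first jump of the walk from s to t through the word v:
it happens at some letter i of v, leads from s to j > s, and every letter before it
contributes its diagonal entry at s.\<close>
lemma wmat_above_diag:
  assumes up: "\<forall>x<m. upper_tri k (u x)" and "set v \<subseteq> {..<m}" and "s < t" "t < k"
  shows "wmat k u v s t = (\<Sum>j\<in>{s<..t}. \<Sum>i<m.
           u i s j * fact_sum_gen [i] (\<lambda>_ x. u x s s) (\<lambda>v'. wmat k u v' j t) v)"
  using assms(2)
proof (induction v)
  case (Cons x v)
  let ?F = "\<lambda>i j v. fact_sum_gen [i] (\<lambda>_ x. u x s s) (\<lambda>v'. wmat k u v' j t) v"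
  have xm: "x < m" and vm: "set v \<subseteq> {..<m}" using Cons.prems by auto
  have upv: "upper_tri k (wmat k u v)" using vm up by (intro upper_tri_wmat) auto
  have upx: "upper_tri k (u x)" using up xm by auto
  have "wmat k u (x # v) s t = (\<Sum>l<k. u x s l * wmat k u v l t)" by (simp add: mmul_def)
  also have "\<dots> = (\<Sum>l\<in>{s..t}. u x s l * wmat k u v l t)"
    by (rule sum.mono_neutral_right) (use \<open>t < k\<close> upper_triD[OF upv] upper_triD[OF upx] in auto)
  also have "{s..t} = insert s {s<..t}" using \<open>s < t\<close> by auto
  finally have "wmat k u (x # v) s t
      = u x s s * wmat k u v s t + (\<Sum>l\<in>{s<..t}. u x s l * wmat k u v l t)"
    by simp
  also have "wmat k u v s t = (\<Sum>j\<in>{s<..t}. \<Sum>i<m. u i s j * ?F i j v)"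
    using Cons.IH vm by simp
  finally have lhs: "wmat k u (x # v) s t = u x s s * (\<Sum>j\<in>{s<..t}. \<Sum>i<m. u i s j * ?F i j v)
      + (\<Sum>l\<in>{s<..t}. u x s l * wmat k u v l t)" .
  have delta: "(\<Sum>i<m. u i s j * (if x = i then wmat k u v j t else 0)) = u x s j * wmat k u v j t"
    for j
    using xm by (simp add: if_distrib[of "\<lambda>q. u _ s j * q"] cong: if_cong)
  have "(\<Sum>j\<in>{s<..t}. \<Sum>i<m. u i s j * ?F i j (x # v))
     = (\<Sum>j\<in>{s<..t}. \<Sum>i<m. u i s j * (if x = i then wmat k u v j t else 0)
           + u x s s * (u i s j * ?F i j v))"
    by (simp only: fact_sum_gen_single_Cons) (simp add: algebra_simps)
  also have "\<dots> = (\<Sum>l\<in>{s<..t}. u x s l * wmat k u v l t)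
      + u x s s * (\<Sum>j\<in>{s<..t}. \<Sum>i<m. u i s j * ?F i j v)"
    by (simp only: sum.distrib delta sum_distrib_left)
  finally show ?case using lhs by simp
qed (use \<open>s < t\<close> in \<open>simp add: mone_def\<close>)

text \<open>The contribution to an entry of p(u) of those walks whose first jumps are made by the
letters is from positions with diagonals z, and which have reached position s; the rest of
the word is evaluated as its (s,t) entry.\<close>
definition peval_expand ::
  "(nat list \<Rightarrow> 'a::comm_ring_1) \<Rightarrow> nat \<Rightarrow> (nat \<Rightarrow> nat \<Rightarrow> nat \<Rightarrow> 'a) \<Rightarrow> nat \<Rightarrow> nat \<Rightarrow>
    nat list \<Rightarrow> (nat \<Rightarrow> nat \<Rightarrow> 'a) \<Rightarrow> 'a" where
  "peval_expand p k u s t is z = (\<Sum>w\<in>{w. p w \<noteq> 0}. p w * fact_sum_gen is z (\<lambda>v. wmat k u v s t) w)"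

lemma nc_polyD: "nc_poly m p \<Longrightarrow> p w \<noteq> 0 \<Longrightarrow> set w \<subseteq> {..<m}"
  unfolding nc_poly_def by blast

lemma peval_eq_peval_expand_Nil: "peval k p u s t = peval_expand p k u s t [] z"
  by (simp add: peval_def peval_expand_def)

lemma peval_expand_diag:
  assumes "nc_poly m p" "\<forall>x<m. upper_tri k (u x)" "s < k"
  shows "peval_expand p k u s s is z
    = pcomm p is (\<lambda>a. if a < length is then z a else (\<lambda>x. u x s s))"
  unfolding peval_expand_def pcomm_def
proof (rule sum.cong)
  fix w assume "w \<in> {w. p w \<noteq> 0}"
  then have "set w \<subseteq> {..<m}" using assms(1) nc_polyD by blast
  then have "fact_sum_gen is z (\<lambda>v. wmat k u v s s) w
      = fact_sum_gen is z (\<lambda>v. prod_list (map (\<lambda>x. u x s s) v)) w"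
    using assms(2,3) by (intro fact_sum_gen_cong wmat_diag) auto
  then show "p w * fact_sum_gen is z (\<lambda>v. wmat k u v s s) w
      = p w * fact_sum is (\<lambda>a. if a < length is then z a else (\<lambda>x. u x s s)) w"
    by (simp add: fact_sum_gen_prod_list)
qed simp

lemma peval_expand_step:
  fixes "is" :: "nat list" and z :: "nat \<Rightarrow> nat \<Rightarrow> 'a::comm_ring_1"
  assumes "nc_poly m p" "\<forall>x<m. upper_tri k (u x)" "s < t" "t < k"
  defines "z' \<equiv> \<lambda>a. if a < length is then z a else (\<lambda>x. u x s s)"
  shows "peval_expand p k u s t is z
    = (\<Sum>j\<in>{s<..t}. \<Sum>i<m. u i s j * peval_expand p k u j t (is @ [i]) z')"
proof -
  have summand: "p w * fact_sum_gen is z (\<lambda>v. wmat k u v s t) w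
      = (\<Sum>j\<in>{s<..t}. \<Sum>i<m. u i s j * (p w * fact_sum_gen (is @ [i]) z' (\<lambda>v. wmat k u v j t) w))"
    if "p w \<noteq> 0" for w
  proof -
    have "set w \<subseteq> {..<m}" using assms(1) nc_polyD that by blast
    then have "fact_sum_gen is z (\<lambda>v. wmat k u v s t) w
      = fact_sum_gen is z (\<lambda>v. \<Sum>j\<in>{s<..t}. \<Sum>i<m.
          u i s j * fact_sum_gen [i] (\<lambda>_ x. u x s s) (\<lambda>v'. wmat k u v' j t) v) w"
      using wmat_above_diag[OF assms(2) _ assms(3,4)]
      by (intro fact_sum_gen_cong) (meson order_trans)
    also have "\<dots> = (\<Sum>j\<in>{s<..t}. \<Sum>i<m. u i s j * fact_sum_gen (is @ [i]) z' (\<lambda>v. wmat k u v j t) w)"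
      by (simp only: fact_sum_gen_sum fact_sum_gen_mult fact_sum_gen_nested z'_def)
    finally show ?thesis by (simp add: sum_distrib_left algebra_simps)
  qed
  have "peval_expand p k u s t is z = (\<Sum>w\<in>{w. p w \<noteq> 0}. \<Sum>j\<in>{s<..t}. \<Sum>i<m.
      u i s j * (p w * fact_sum_gen (is @ [i]) z' (\<lambda>v. wmat k u v j t) w))"
    unfolding peval_expand_def by (intro sum.cong) (auto simp: summand)
  also have "\<dots> = (\<Sum>j\<in>{s<..t}. \<Sum>i<m. \<Sum>w\<in>{w. p w \<noteq> 0}.
      u i s j * (p w * fact_sum_gen (is @ [i]) z' (\<lambda>v. wmat k u v j t) w))"
    by (subst sum.swap) (simp add: sum.swap[of _ "{..<m}"])
  also have "\<dots> = (\<Sum>j\<in>{s<..t}. \<Sum>i<m. u i s j * peval_expand p k u j t (is @ [i]) z')"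
    unfolding peval_expand_def by (simp add: sum_distrib_left)
  finally show ?thesis .
qed

lemma peval_expand_eq_0:
  assumes "nc_poly m p" "\<forall>x<m. upper_tri k (u x)"
    and pcomm_0: "\<And>is z. length is \<le> d \<Longrightarrow> set is \<subseteq> {..<m} \<Longrightarrow> pcomm p is z = 0"
  shows "s \<le> t \<Longrightarrow> t < k \<Longrightarrow> set is \<subseteq> {..<m} \<Longrightarrow> length is + (t - s) \<le> d \<Longrightarrow>
    peval_expand p k u s t is z = 0"
proof (induction "t - s" arbitrary: s "is" z rule: less_induct)
  case less
  show ?case
  proof (cases "s = t")
    case True
    then show ?thesis using peval_expand_diag[OF assms(1,2)] less.prems pcomm_0 by simp
  next
    case False
    then have "s < t" using less.prems by simp
    have "peval_expand p k u j t (is @ [i]) z' = 0" if "j \<in> {s<..t}" "i < m" for j i z'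
      using that less.prems by (intro less.hyps) auto
    then show ?thesis using peval_expand_step[OF assms(1,2) \<open>s < t\<close> less.prems(2)] by simp
  qed
qed

lemma upper_tri_peval:
  assumes "nc_poly m p" "\<forall>x<m. upper_tri k (u x)"
  shows "upper_tri k (peval k p u)"
  unfolding upper_tri_def
proof (intro allI impI)
  fix i j assume "peval k p u i j \<noteq> 0"
  then obtain w where "p w * wmat k u w i j \<noteq> 0"
    unfolding peval_def by (meson sum.not_neutral_contains_not_neutral)
  then have "p w \<noteq> 0" "wmat k u w i j \<noteq> 0" by auto
  moreover have "upper_tri k (wmat k u w)"
    using assms nc_polyD[OF assms(1) \<open>p w \<noteq> 0\<close>] by (intro upper_tri_wmat) auto
  ultimately show "i \<le> j \<and> j < k" unfolding upper_tri_def by blast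
qed

lemma upper_tri_shift_peval:
  assumes "nc_poly m p" "\<forall>x<m. upper_tri k (u x)"
    and "\<And>is z. length is \<le> d \<Longrightarrow> set is \<subseteq> {..<m} \<Longrightarrow> pcomm p is z = 0"
  shows "upper_tri_shift k d (peval k p u)"
proof -
  have up: "upper_tri k (peval k p u)" using upper_tri_peval[OF assms(1,2)] .
  have "peval k p u i j = 0" if "j < k" "int j - int i \<le> int d" for i j
  proof (cases "i \<le> j")
    case True
    then have "peval_expand p k u i j [] (\<lambda>_ _. 0) = 0"
      using that by (intro peval_expand_eq_0[OF assms]) auto
    then show ?thesis using peval_eq_peval_expand_Nil[of k p u i j] by simp
  qed (use upper_triD[OF up] in auto)
  with up show ?thesis unfolding upper_tri_shift_def by blast
qed

text \<open>For the bidiagonal substitution u below, the only walk from 0 to length is runs along the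
superdiagonal, so the (0, length is) entry of p(u) is exactly pcomm p is z.\<close>
lemma pcomm_eq_0_if_is_PI:
  assumes np: "nc_poly m p" and "is_PI k p" and "length is < k" and is_m: "set is \<subseteq> {..<m}"
  shows "pcomm p is z = 0"
proof -
  define L where "L = length is"
  define u where "u = (\<lambda>x a b. if a = b \<and> a \<le> L then z a x
      else if b = Suc a \<and> a < L \<and> is ! a = x then (1::'a) else 0)"
  have up: "\<forall>x. upper_tri k (u x)"
    using \<open>length is < k\<close> unfolding upper_tri_def u_def L_def by auto
  then have up_m: "\<forall>x<m. upper_tri k (u x)" by blast
  have jump: "u i n j * c = (if j = Suc n \<and> i = is ! n then c else 0)"
    if "n < j" "n < L" for i n j c
    using that by (auto simp: u_def)
  have expand_from: "peval_expand p k u s L (take s is) z' = pcomm p is z"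
    if "s \<le> L" "\<forall>a<s. z' a = z a" for s z'
    using that
  proof (induction s arbitrary: z' rule: inc_induct)
    case base
    have "peval_expand p k u L L (take L is) z'
        = pcomm p is (\<lambda>a. if a < L then z' a else (\<lambda>x. u x L L))"
      using peval_expand_diag[OF np up_m, of L "take L is" z'] \<open>length is < k\<close>
      by (simp add: L_def)
    also have "\<dots> = pcomm p is z"
      by (rule pcomm_cong) (use base L_def in \<open>auto simp: u_def\<close>)
    finally show ?case .
  next
    case (step n)
    define z'' where "z'' = (\<lambda>a. if a < length (take n is) then z' a else (\<lambda>x. u x n n))"
    have n_m: "is ! n < m" using is_m step.hyps L_def by (metis lessThan_iff nth_mem subsetD)
    have "peval_expand p k u n L (take n is) z'
      = (\<Sum>j\<in>{n<..L}. \<Sum>i<m. u i n j * peval_expand p k u j L (take n is @ [i]) z'')"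
      using peval_expand_step[OF np up_m] step.hyps \<open>length is < k\<close>
      by (simp add: z''_def L_def)
    also have "\<dots> = (\<Sum>j\<in>{n<..L}.
        if j = Suc n then peval_expand p k u j L (take n is @ [is ! n]) z'' else 0)"
      using step.hyps n_m by (intro sum.cong) (auto simp: jump sum.delta')
    also have "\<dots> = peval_expand p k u (Suc n) L (take (Suc n) is) z''"
      using step.hyps by (simp add: take_Suc_conv_app_nth L_def)
    also have "\<dots> = pcomm p is z"
      using step.prems step.hyps by (intro step.IH) (auto simp: z''_def u_def L_def less_Suc_eq)
    finally show ?case .
  qed
  have "peval k p u 0 L = pcomm p is z"
    using peval_eq_peval_expand_Nil[of k p u 0 L z] expand_from[of 0 z] by simp
  with \<open>is_PI k p\<close> up \<open>length is < k\<close> show ?thesis unfolding is_PI_def L_def by auto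
qed

lemma is_PI_iff_pcomm_eq_0:
  assumes "nc_poly m p"
  shows "is_PI k p \<longleftrightarrow> (\<forall>is z. length is < k \<longrightarrow> set is \<subseteq> {..<m} \<longrightarrow> pcomm p is z = 0)"
proof
  show "is_PI k p \<Longrightarrow> \<forall>is z. length is < k \<longrightarrow> set is \<subseteq> {..<m} \<longrightarrow> pcomm p is z = 0"
    using pcomm_eq_0_if_is_PI[OF assms] by blast
next
  assume pcomm_0: "\<forall>is z. length is < k \<longrightarrow> set is \<subseteq> {..<m} \<longrightarrow> pcomm p is z = 0"
  show "is_PI k p"
    unfolding is_PI_def
  proof (intro allI impI)
    fix u :: "nat \<Rightarrow> nat \<Rightarrow> nat \<Rightarrow> 'a" and i j
    assume "\<forall>x. upper_tri k (u x)" "i < k" "j < k"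
    moreover from this have "upper_tri_shift k (k - 1) (peval k p u)"
      using pcomm_0 by (intro upper_tri_shift_peval[OF assms]) auto
    ultimately show "peval k p u i j = 0" unfolding upper_tri_shift_def by auto
  qed
qed

lemma is_PI_ord: "1 \<le> ord p \<Longrightarrow> is_PI (ord p) p \<and> \<not> is_PI (Suc (ord p)) p"
proof -
  let ?P = "\<lambda>k. 1 \<le> k \<and> is_PI k p \<and> \<not> is_PI (Suc k) p"
  assume "1 \<le> ord p"
  then have "ord p = (LEAST k. ?P k)" and "\<exists>k. ?P k"
    unfolding ord_def by (auto split: if_splits)
  then show ?thesis using LeastI_ex[of ?P] by simp
qed

theorem lemma3p4:
  fixes p :: "nat list \<Rightarrow> 'a::alg_closed_field" and m n r :: nat
  assumes "m \<ge> 1" and "n \<ge> 2"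
    and "nc_poly m p"
    and "ord p = r" and "1 \<le> r" and "r \<le> n - 1"
  shows "(\<forall>c. peval_scalar p c = 0)
    \<and> (r \<ge> 2 \<longrightarrow>
         (\<forall>k is z. 1 \<le> k \<and> k \<le> r - 1 \<and> length is = k \<and> set is \<subseteq> {..<m} \<longrightarrow> pcomm p is z = 0)
       \<and> (\<forall>u. (\<forall>x<m. upper_tri n (u x)) \<longrightarrow> upper_tri_shift n (r - 1) (peval n p u)))
    \<and> (\<exists>is z. length is = r \<and> set is \<subseteq> {..<m} \<and> pcomm p is z \<noteq> 0)"
proof -
  have "is_PI r p" and "\<not> is_PI (Suc r) p" using is_PI_ord assms(4,5) by auto
  then have below_r: "\<And>is z. length is < r \<Longrightarrow> set is \<subseteq> {..<m} \<Longrightarrow> pcomm p is z = 0"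
    and "\<exists>is z. length is < Suc r \<and> set is \<subseteq> {..<m} \<and> pcomm p is z \<noteq> 0"
    using is_PI_iff_pcomm_eq_0[OF assms(3)] by blast+
  then have "\<exists>is z. length is = r \<and> set is \<subseteq> {..<m} \<and> pcomm p is z \<noteq> 0"
    using less_Suc_eq by blast
  moreover have "peval_scalar p c = 0" for c
    using below_r[of "[]" "\<lambda>_. c"] \<open>1 \<le> r\<close> by (simp add: pcomm_Nil)
  moreover have "upper_tri_shift n (r - 1) (peval n p u)" if "\<forall>x<m. upper_tri n (u x)" for u
    using below_r \<open>1 \<le> r\<close> by (intro upper_tri_shift_peval[OF assms(3) that]) auto
  ultimately show ?thesis using below_r by auto
qed

end
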